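(* Let $k\geq1$ and $S=sgp^+\langle a,b\mid a^kb=b\rangle$. Then $S$ is prefix-automatic but not biautomatic.
   Context: $sgp^+\langle A\mid R\rangle$ is the free semigroup $A^+$ (nonempty words) modulo the congruence generated by $R$; $A^*$ is the free monoid with empty word $\varepsilon$. Automaticity: regular = accepted by a finite automaton. With $\$\notin A$, $A(2,\$)=(A\cup\{\$\})^2\setminus\{(\$,\$)\}$; $(\alpha,\beta)\delta_A^R$ (resp. $\delta_A^L$) is the word over $A(2,\$)$ obtained by padding the shorter word on the right (resp. left) with $\$$'s and reading letter pairs. For a semigroup $S$ generated by a finite set $A$, $\phi:A^+\to S$ canonical, $L\subseteq A^+$ regular with $\phi(L)=S$, write $\alpha=\beta$ if $\phi(\alpha)=\phi(\beta)$, and for $a\in A\cup\{\varepsilon\}$: $L_a^\$=\{(\alpha,\beta)\delta^R_A:\alpha a=\beta\}$, ${}^\$L_a=\{(\alpha,\beta)\delta^L_A:\alpha a=\beta\}$, ${}_aL^\$=\{(\alpha,\beta)\delta^R_A:a\alpha=\beta\}$, ${}^\$_aL=\{(\alpha,\beta)\delta^L_A:a\alpha=\beta\}$ (with $\alpha,\beta\in L$). $S$ is automatic if some such $(A,L)$ (for some finite generating set $A$) has all $L_a^\$$ regular; biautomatic if some $(A,L)$ has all four families regular; prefix-automatic if some automatic structure $(A,L)$ also has $\{(\alpha,\beta)\delta_A^R:\alpha\in L,\beta\in\mathrm{Pref}(L),\alpha=\beta\}$ regular ($\mathrm{Pref}(L)$ = prefixes of words of $L$). *)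

theory Defs
  imports Main
begin

definition regular :: "'c list set \<Rightarrow> bool" where
  "regular L \<longleftrightarrow> (\<exists>(N::nat) (\<delta>::nat \<Rightarrow> 'c \<Rightarrow> nat) q0 (F::nat set).
      q0 < N \<and> (\<forall>q<N. \<forall>c. \<delta> q c < N) \<and> L = {w. foldl \<delta> q0 w \<in> F})"

definition padR :: "'a list \<Rightarrow> 'a list \<Rightarrow> ('a option \<times> 'a option) list" where
  "padR u v = (let n = max (length u) (length v) in
     zip (map Some u @ replicate (n - length u) None)
         (map Some v @ replicate (n - length v) None))"

definition padL :: "'a list \<Rightarrow> 'a list \<Rightarrow> ('a option \<times> 'a option) list" where
  "padL u v = (let n = max (length u) (length v) in
     zip (replicate (n - length u) None @ map Some u)
         (replicate (n - length v) None @ map Some v))"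

fun evalw :: "('s \<Rightarrow> 's \<Rightarrow> 's) \<Rightarrow> 's list \<Rightarrow> 's" where
  "evalw m [] = undefined"
| "evalw m (x # xs) = foldl m x xs"

text \<open>Right / left multiplication by a generator or by the empty word (None).\<close>
definition rmul :: "('s \<Rightarrow> 's \<Rightarrow> 's) \<Rightarrow> 's \<Rightarrow> 's option \<Rightarrow> 's" where
  "rmul m x a = (case a of None \<Rightarrow> x | Some y \<Rightarrow> m x y)"

definition lmul :: "('s \<Rightarrow> 's \<Rightarrow> 's) \<Rightarrow> 's option \<Rightarrow> 's \<Rightarrow> 's" where
  "lmul m a x = (case a of None \<Rightarrow> x | Some y \<Rightarrow> m y x)"

definition gen_lang :: "'s set \<Rightarrow> ('s \<Rightarrow> 's \<Rightarrow> 's) \<Rightarrow> 's set \<Rightarrow> 's list set \<Rightarrow> bool" where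
  "gen_lang Sc m A L \<longleftrightarrow> finite A \<and> A \<subseteq> Sc \<and>
     (\<forall>w\<in>L. w \<noteq> [] \<and> set w \<subseteq> A) \<and> regular L \<and> evalw m ` L = Sc"

definition LR :: "('s \<Rightarrow> 's \<Rightarrow> 's) \<Rightarrow> 's list set \<Rightarrow> 's option \<Rightarrow> ('s option \<times> 's option) list set" where
  "LR m L a = {padR u v | u v. u \<in> L \<and> v \<in> L \<and> rmul m (evalw m u) a = evalw m v}"

definition LL :: "('s \<Rightarrow> 's \<Rightarrow> 's) \<Rightarrow> 's list set \<Rightarrow> 's option \<Rightarrow> ('s option \<times> 's option) list set" where
  "LL m L a = {padL u v | u v. u \<in> L \<and> v \<in> L \<and> rmul m (evalw m u) a = evalw m v}"

definition RR :: "('s \<Rightarrow> 's \<Rightarrow> 's) \<Rightarrow> 's list set \<Rightarrow> 's option \<Rightarrow> ('s option \<times> 's option) list set" where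
  "RR m L a = {padR u v | u v. u \<in> L \<and> v \<in> L \<and> lmul m a (evalw m u) = evalw m v}"

definition RL :: "('s \<Rightarrow> 's \<Rightarrow> 's) \<Rightarrow> 's list set \<Rightarrow> 's option \<Rightarrow> ('s option \<times> 's option) list set" where
  "RL m L a = {padL u v | u v. u \<in> L \<and> v \<in> L \<and> lmul m a (evalw m u) = evalw m v}"

definition automatic_structure :: "'s set \<Rightarrow> ('s \<Rightarrow> 's \<Rightarrow> 's) \<Rightarrow> 's set \<Rightarrow> 's list set \<Rightarrow> bool" where
  "automatic_structure Sc m A L \<longleftrightarrow> gen_lang Sc m A L \<and>
     (\<forall>a\<in>insert None (Some ` A). regular (LR m L a))"

definition automatic :: "'s set \<Rightarrow> ('s \<Rightarrow> 's \<Rightarrow> 's) \<Rightarrow> bool" where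
  "automatic Sc m \<longleftrightarrow> (\<exists>A L. automatic_structure Sc m A L)"

definition biautomatic :: "'s set \<Rightarrow> ('s \<Rightarrow> 's \<Rightarrow> 's) \<Rightarrow> bool" where
  "biautomatic Sc m \<longleftrightarrow> (\<exists>A L. gen_lang Sc m A L \<and>
     (\<forall>a\<in>insert None (Some ` A).
        regular (LR m L a) \<and> regular (LL m L a) \<and> regular (RR m L a) \<and> regular (RL m L a)))"

text \<open>Prefixes of words of L; only nonempty prefixes can represent semigroup elements.\<close>
definition Pref :: "'a list set \<Rightarrow> 'a list set" where
  "Pref L = {p. \<exists>w\<in>L. \<exists>s. w = p @ s}"

definition prefix_automatic :: "'s set \<Rightarrow> ('s \<Rightarrow> 's \<Rightarrow> 's) \<Rightarrow> bool" where
  "prefix_automatic Sc m \<longleftrightarrow> (\<exists>A L. automatic_structure Sc m A L \<and>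
     regular {padR u v | u v. u \<in> L \<and> v \<in> Pref L \<and> v \<noteq> [] \<and> evalw m u = evalw m v})"

inductive_set pres_cong :: "('g list \<times> 'g list) set \<Rightarrow> ('g list \<times> 'g list) set"
  for R where
  gen: "(u, v) \<in> R \<Longrightarrow> (u, v) \<in> pres_cong R"
| refl: "w \<noteq> [] \<Longrightarrow> (w, w) \<in> pres_cong R"
| sym: "(u, v) \<in> pres_cong R \<Longrightarrow> (v, u) \<in> pres_cong R"
| trans: "(u, v) \<in> pres_cong R \<Longrightarrow> (v, w) \<in> pres_cong R \<Longrightarrow> (u, w) \<in> pres_cong R"
| ctx: "(u, v) \<in> pres_cong R \<Longrightarrow> (p @ u @ q, p @ v @ q) \<in> pres_cong R"

definition sgp_carrier :: "('g list \<times> 'g list) set \<Rightarrow> 'g list set set" where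
  "sgp_carrier R = {pres_cong R `` {w} | w. w \<noteq> []}"

definition sgp_mult :: "('g list \<times> 'g list) set \<Rightarrow> 'g list set \<Rightarrow> 'g list set \<Rightarrow> 'g list set" where
  "sgp_mult R X Y = pres_cong R `` {(SOME x. x \<in> X) @ (SOME y. y \<in> Y)}"

text \<open>The relation a^k b = b over generators a = True, b = False.\<close>
definition rel_akb :: "nat \<Rightarrow> (bool list \<times> bool list) set" where
  "rel_akb k = {(replicate k True @ [False], [False])}"

end

(*
  Using a^k b = b, every element has a unique representative in which no b is preceded by k
  consecutive a's; these normal forms form a regular language, and so do their nonempty
  prefixes. Right multiplication by a appends a, and right multiplication by b appends b unless
  the final block a^n has n >= k, in which case it shrinks to a^(n mod k) b. A finite automaton
  checks both relations, counting the overhanging a's modulo k; this gives prefix-automaticity.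

  The number of b's is invariant under the relation. Fix a generator h whose representative
  contains b and a regular language L over the generators. For each j >= 1, the element b^j a^n,
  with n a large multiple of k, has a representative u in L ending in so many a's that h absorbs
  them: u h = b^j h = v for some v in L, and the last |v| letters of u spell only a's. In the
  left-padded pair (u, v) all j b's therefore lie in the part of u read against padding symbols.
  An automaton for the left-padded language of right multiplication by h is in the same state
  after that part for two different j, so exchanging the two parts yields an accepted pair that
  changes the number of b's.
*)
theory Submission
  imports Defs
begin

section \<open>Regular languages\<close>

lemma regularI:
  fixes \<delta> :: "'q \<Rightarrow> 'c \<Rightarrow> 'q"
  assumes fin: "finite Q" and q0: "q0 \<in> Q" and closed: "\<And>q c. q \<in> Q \<Longrightarrow> \<delta> q c \<in> Q"
  shows "regular {w. foldl \<delta> q0 w \<in> F}"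
proof -
  define N where "N = card Q"
  obtain h where h: "bij_betw h {0..<N} Q"
    using ex_bij_betw_nat_finite[OF fin] unfolding N_def by blast
  define g where "g = inv_into {0..<N} h"
  define \<delta>' where "\<delta>' i c = (if i < N then g (\<delta> (h i) c) else 0)" for i c
  have hQ: "i < N \<Longrightarrow> h i \<in> Q" for i
    using h by (auto simp: bij_betw_def)
  have gQ: "q \<in> Q \<Longrightarrow> g q < N \<and> h (g q) = q" for q
    using h unfolding g_def by (auto simp: bij_betw_def f_inv_into_f inv_into_into)
  have sim: "i < N \<Longrightarrow> foldl \<delta>' i w < N \<and> h (foldl \<delta>' i w) = foldl \<delta> (h i) w" for i w
  proof (induction w arbitrary: i)
    case (Cons c w)
    then have "\<delta>' i c < N" "h (\<delta>' i c) = \<delta> (h i) c"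
      using gQ closed hQ unfolding \<delta>'_def by auto
    then show ?case using Cons.IH[of "\<delta>' i c"] by simp
  qed simp
  have "{w. foldl \<delta> q0 w \<in> F} = {w. foldl \<delta>' (g q0) w \<in> {i. h i \<in> F}}"
    using sim[of "g q0"] gQ[OF q0] by auto
  moreover have "\<forall>q<N. \<forall>c. \<delta>' q c < N"
    using sim[of _ "[_]"] by simp
  ultimately show ?thesis
    unfolding regular_def using gQ[OF q0] by blast
qed

lemma regularE:
  assumes "regular L"
  obtains N and \<delta> :: "nat \<Rightarrow> 'c \<Rightarrow> nat" and q0 F
  where "q0 < N" "\<forall>q<N. \<forall>c. \<delta> q c < N" "L = {w. foldl \<delta> q0 w \<in> F}"
  using assms unfolding regular_def by blast

lemma foldl_closed: "(\<And>q c. q \<in> Q \<Longrightarrow> \<delta> q c \<in> Q) \<Longrightarrow> q \<in> Q \<Longrightarrow> foldl \<delta> q w \<in> Q"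
  by (induction w arbitrary: q) auto

lemma regular_Nil: "regular {[]}"
proof -
  have "regular {w. foldl (\<lambda>_ _. False) True w \<in> {True}}"
    by (rule regularI[where Q = UNIV]) auto
  moreover have "foldl (\<lambda>_ _. False) b w = (w = [] \<and> b)" for w :: "'c list" and b
    by (induction w arbitrary: b) auto
  then have "{w. foldl (\<lambda>_ _. False) True w \<in> {True}} = {[]}"
    by auto
  ultimately show ?thesis by metis
qed

lemma regular_Un:
  assumes "regular X" "regular Y"
  shows "regular (X \<union> Y)"
proof -
  obtain N1 :: nat and \<delta>1 q1 F1 where N1: "q1 < N1" "\<forall>q<N1. \<forall>c. \<delta>1 q c < N1"
    and X: "X = {w. foldl \<delta>1 q1 w \<in> F1}" by (rule regularE[OF assms(1)])
  obtain N2 :: nat and \<delta>2 q2 F2 where N2: "q2 < N2" "\<forall>q<N2. \<forall>c. \<delta>2 q c < N2"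
    and Y: "Y = {w. foldl \<delta>2 q2 w \<in> F2}" by (rule regularE[OF assms(2)])
  define \<delta> where "\<delta> s c = (\<delta>1 (fst s) c, \<delta>2 (snd s) c)" for s c
  have run: "foldl \<delta> (p, q) w = (foldl \<delta>1 p w, foldl \<delta>2 q w)" for p q w
    by (induction w arbitrary: p q) (auto simp: \<delta>_def)
  have "regular {w. foldl \<delta> (q1, q2) w \<in> {s. fst s \<in> F1 \<or> snd s \<in> F2}}"
    by (rule regularI[where Q = "{..<N1} \<times> {..<N2}"]) (use N1 N2 in \<open>auto simp: \<delta>_def\<close>)
  then show ?thesis
    unfolding X Y by (simp add: run Collect_disj_eq)
qed

lemma regular_map_image:
  assumes "regular X" "inj \<phi>"
  shows "regular (map \<phi> ` X)"
proof -
  obtain N :: nat and \<delta> q0 F where N: "q0 < N" "\<forall>q<N. \<forall>c. \<delta> q c < N"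
    and X: "X = {w. foldl \<delta> q0 w \<in> F}" by (rule regularE[OF assms(1)])
  define \<delta>' where "\<delta>' s e = (case s of None \<Rightarrow> None
     | Some q \<Rightarrow> (if e \<in> range \<phi> then Some (\<delta> q (inv \<phi> e)) else None))" for s e
  have dead: "foldl \<delta>' None w = None" for w
    by (induction w) (auto simp: \<delta>'_def)
  have run: "foldl \<delta>' (Some q) w =
      (if set w \<subseteq> range \<phi> then Some (foldl \<delta> q (map (inv \<phi>) w)) else None)" for q w
    by (induction w arbitrary: q) (auto simp: \<delta>'_def dead)
  have reg: "regular {w. foldl \<delta>' (Some q0) w \<in> Some ` F}"
    by (rule regularI[where Q = "insert None (Some ` {..<N})"]) (use N in \<open>auto simp: \<delta>'_def\<close>)
  have "w \<in> map \<phi> ` X \<longleftrightarrow> set w \<subseteq> range \<phi> \<and> map (inv \<phi>) w \<in> X" for w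
  proof
    assume "w \<in> map \<phi> ` X"
    then show "set w \<subseteq> range \<phi> \<and> map (inv \<phi>) w \<in> X"
      using assms(2) by (auto simp: comp_def)
  next
    assume w: "set w \<subseteq> range \<phi> \<and> map (inv \<phi>) w \<in> X"
    then have "map (\<phi> \<circ> inv \<phi>) w = w"
      by (intro map_idI) (auto simp: f_inv_into_f)
    then show "w \<in> map \<phi> ` X" using w by (metis map_map rev_image_eqI)
  qed
  then have "map \<phi> ` X = {w. foldl \<delta>' (Some q0) w \<in> Some ` F}"
    unfolding X by (auto simp: run)
  then show ?thesis using reg by simp
qed

lemma regular_append_marker:
  assumes "regular X" "regular Z" "\<forall>x\<in>X. c \<notin> set x"
  shows "regular {x @ [c] @ z | x z. x \<in> X \<and> z \<in> Z}"
proof -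
  obtain N1 :: nat and \<delta>1 q1 F1 where N1: "q1 < N1" "\<forall>q<N1. \<forall>c. \<delta>1 q c < N1"
    and X: "X = {w. foldl \<delta>1 q1 w \<in> F1}" by (rule regularE[OF assms(1)])
  obtain N2 :: nat and \<delta>2 q2 F2 where N2: "q2 < N2" "\<forall>q<N2. \<forall>c. \<delta>2 q c < N2"
    and Z: "Z = {w. foldl \<delta>2 q2 w \<in> F2}" by (rule regularE[OF assms(2)])
  define \<delta> where "\<delta> s e = (case s of None \<Rightarrow> None
     | Some (Inl q) \<Rightarrow> (if e = c then (if q \<in> F1 then Some (Inr q2) else None) else Some (Inl (\<delta>1 q e)))
     | Some (Inr q) \<Rightarrow> Some (Inr (\<delta>2 q e)))" for s e
  have dead: "foldl \<delta> None w = None" for w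
    by (induction w) (auto simp: \<delta>_def)
  have runR: "foldl \<delta> (Some (Inr q)) w = Some (Inr (foldl \<delta>2 q w))" for q w
    by (induction w arbitrary: q) (auto simp: \<delta>_def)
  have runL: "c \<notin> set w \<Longrightarrow> foldl \<delta> (Some (Inl q)) w = Some (Inl (foldl \<delta>1 q w))" for q w
    by (induction w arbitrary: q) (auto simp: \<delta>_def)
  have runC: "c \<notin> set x \<Longrightarrow> foldl \<delta> (Some (Inl q)) (x @ c # z) =
      (if foldl \<delta>1 q x \<in> F1 then Some (Inr (foldl \<delta>2 q2 z)) else None)" for q x z
    using runL[of x q] by (simp add: \<delta>_def runR dead)
  have reg: "regular {w. foldl \<delta> (Some (Inl q1)) w \<in> Some ` Inr ` F2}"
    by (rule regularI[where Q = "insert None (Some ` (Inl ` {..<N1} \<union> Inr ` {..<N2}))"])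
      (use N1 N2 in \<open>auto simp: \<delta>_def split: option.split sum.split\<close>)
  have "{w. foldl \<delta> (Some (Inl q1)) w \<in> Some ` Inr ` F2} = {x @ [c] @ z | x z. x \<in> X \<and> z \<in> Z}"
  proof (intro set_eqI iffI)
    fix w
    assume w: "w \<in> {w. foldl \<delta> (Some (Inl q1)) w \<in> Some ` Inr ` F2}"
    then have "c \<in> set w"
      using runL[of w q1] by (cases "c \<in> set w") auto
    then obtain x z where "w = x @ c # z" "c \<notin> set x"
      by (meson split_list_first)
    then show "w \<in> {x @ [c] @ z | x z. x \<in> X \<and> z \<in> Z}"
      using w runC[of x q1 z] unfolding X Z by (auto split: if_splits)
  next
    fix w
    assume "w \<in> {x @ [c] @ z | x z. x \<in> X \<and> z \<in> Z}"
    then obtain x z where "w = x @ c # z" "x \<in> X" "z \<in> Z"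
      by auto
    then show "w \<in> {w. foldl \<delta> (Some (Inl q1)) w \<in> Some ` Inr ` F2}"
      using assms(3) runC[of x q1 z] unfolding X Z by auto
  qed
  then show ?thesis using reg by simp
qed

lemma regular_replicate_mod:
  assumes "0 < (k::nat)"
  shows "regular {replicate t d | t. P (t mod k)}"
proof -
  define \<delta> where "\<delta> s e = (case s of None \<Rightarrow> None
     | Some i \<Rightarrow> (if e = d then Some (Suc i mod k) else None))" for s e
  have dead: "foldl \<delta> None w = None" for w
    by (induction w) (simp_all add: \<delta>_def)
  have run: "foldl \<delta> (Some (i mod k)) w =
      (if set w \<subseteq> {d} then Some ((i + length w) mod k) else None)" for i w
  proof (induction w arbitrary: i)
    case (Cons e w)
    show ?case
    proof (cases "e = d")
      case True
      then have "\<delta> (Some (i mod k)) e = Some (Suc i mod k)"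
        by (simp add: \<delta>_def mod_Suc_eq)
      then show ?thesis using Cons.IH[of "Suc i"] True by simp
    next
      case False
      then have "\<delta> (Some (i mod k)) e = None"
        by (simp add: \<delta>_def)
      then show ?thesis using False by (simp add: dead)
    qed
  qed simp
  have "regular {w. foldl \<delta> (Some 0) w \<in> Some ` {i. P i}}"
    by (rule regularI[where Q = "insert None (Some ` {..<k})"])
      (use assms in \<open>auto simp: \<delta>_def split: option.split\<close>)
  moreover have "{w. foldl \<delta> (Some 0) w \<in> Some ` {i. P i}} = {replicate t d | t. P (t mod k)}"
  proof (intro set_eqI iffI)
    fix w
    assume "w \<in> {w. foldl \<delta> (Some 0) w \<in> Some ` {i. P i}}"
    then have "set w \<subseteq> {d}" "P (length w mod k)"
      using run[of 0 w] by (auto split: if_splits)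
    moreover from this have "w = replicate (length w) d"
      by (auto intro: replicate_eqI)
    ultimately show "w \<in> {replicate t d | t. P (t mod k)}"
      by blast
  qed (use run[of 0] in auto)
  ultimately show ?thesis by simp
qed

lemma padR_Cons [simp]: "padR (a # u) (b # v) = (Some a, Some b) # padR u v"
  by (simp add: padR_def Let_def)

lemma padR_Nil1 [simp]: "padR [] v = map (\<lambda>e. (None, Some e)) v"
  by (induction v) (simp_all add: padR_def Let_def)

lemma padR_Nil2 [simp]: "padR u [] = map (\<lambda>e. (Some e, None)) u"
  by (induction u) (simp_all add: padR_def Let_def)

lemma padR_append_same: "padR (x @ u) (x @ v) = map (\<lambda>e. (Some e, Some e)) x @ padR u v"
  by (induction x) simp_all

lemma padR_same: "padR u u = map (\<lambda>e. (Some e, Some e)) u"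
  using padR_append_same[of u "[]" "[]"] by simp

lemma padR_snoc: "padR u (u @ [c]) = map (\<lambda>e. (Some e, Some e)) u @ [(None, Some c)]"
  using padR_append_same[of u "[]" "[c]"] by simp

lemma padL_fst: "map fst (padL u v) = replicate (max (length u) (length v) - length u) None @ map Some u"
  unfolding padL_def Let_def by (simp add: map_fst_zip)

lemma padL_snd: "map snd (padL u v) = replicate (max (length u) (length v) - length v) None @ map Some v"
  unfolding padL_def Let_def by (simp add: map_snd_zip)

lemma padL_inj:
  assumes "padL u v = padL u' v'"
  shows "u = u' \<and> v = v'"
proof -
  have unpad: "map the (filter (\<lambda>x. x \<noteq> None) (replicate n None @ map Some w)) = w" for n w
    by (induction w) simp_all
  show ?thesis
    using unpad[of _ u] unpad[of _ u'] unpad[of _ v] unpad[of _ v']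
      arg_cong[OF assms, of "map fst"] arg_cong[OF assms, of "map snd"]
    unfolding padL_fst padL_snd by metis
qed

lemma padL_longer:
  assumes "length v \<le> length u"
  shows "padL u v = map (\<lambda>x. (Some x, None)) (take (length u - length v) u)
     @ zip (map Some (drop (length u - length v) u)) (map Some v)"
proof -
  let ?c = "length u - length v"
  have "padL u v = zip (map Some (take ?c u) @ map Some (drop ?c u)) (replicate ?c None @ map Some v)"
    using assms unfolding padL_def Let_def by (simp add: max_def flip: map_append)
  also have "\<dots> = zip (map Some (take ?c u)) (replicate ?c None) @ zip (map Some (drop ?c u)) (map Some v)"
    using assms by (intro zip_append) simp
  finally show ?thesis
    by (simp add: zip_replicate2 take_map comp_def)
qed

lemma padL_mem_LL_iff: "padL u v \<in> LL m L a \<longleftrightarrow> u \<in> L \<and> v \<in> L \<and> rmul m (evalw m u) a = evalw m v"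
  unfolding LL_def using padL_inj by blast

text \<open>A pumping argument for left padding: an automaton reading \<open>padL u v\<close> has finitely many
  states after the unpadded head of \<open>u\<close>, so two members of an infinite family share that state
  and their heads can be exchanged.\<close>
lemma regular_padL_splice:
  assumes "regular M" "infinite J"
    and family: "\<forall>j\<in>J. \<exists>u v. padL u v \<in> M \<and> length v \<le> length u \<and> P j u v"
  obtains i j ui vi uj vj where "i \<in> J" "j \<in> J" "i \<noteq> j" "P i ui vi" "P j uj vj" "padL uj vj \<in> M"
    "padL (take (length ui - length vi) ui @ drop (length uj - length vj) uj) vj \<in> M"
proof -
  obtain N :: nat and \<delta> q0 F where N: "q0 < N" "\<forall>q<N. \<forall>c. \<delta> q c < N"
    and M: "M = {w. foldl \<delta> q0 w \<in> F}" by (rule regularE[OF assms(1)])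
  have "\<forall>j\<in>J. \<exists>uv. padL (fst uv) (snd uv) \<in> M \<and> length (snd uv) \<le> length (fst uv) \<and> P j (fst uv) (snd uv)"
    using family by auto
  then have "\<exists>uv. \<forall>j\<in>J. padL (fst (uv j)) (snd (uv j)) \<in> M
      \<and> length (snd (uv j)) \<le> length (fst (uv j)) \<and> P j (fst (uv j)) (snd (uv j))"
    by (rule bchoice)
  then obtain uv where uv: "\<forall>j\<in>J. padL (fst (uv j)) (snd (uv j)) \<in> M
      \<and> length (snd (uv j)) \<le> length (fst (uv j)) \<and> P j (fst (uv j)) (snd (uv j))"
    by blast
  define u where "u j = fst (uv j)" for j
  define v where "v j = snd (uv j)" for j
  define c where "c j = length (u j) - length (v j)" for j
  define state where "state j = foldl \<delta> q0 (map (\<lambda>x. (Some x, None)) (take (c j) (u j)))" for j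
  have "foldl \<delta> q0 w < N" for w
    using foldl_closed[of "{..<N}" \<delta> q0 w] N by auto
  then have "state ` J \<subseteq> {..<N}"
    unfolding state_def by auto
  then have "\<not> inj_on state J"
    using assms(2) finite_imageD finite_subset by blast
  then obtain i j where ij: "i \<in> J" "j \<in> J" "i \<noteq> j" "state i = state j"
    unfolding inj_on_def by blast
  have uvi: "P i (u i) (v i)" and uvj: "padL (u j) (v j) \<in> M" "length (v j) \<le> length (u j)" "P j (u j) (v j)"
    using uv ij(1,2) unfolding u_def v_def by auto
  have "padL (take (c i) (u i) @ drop (c j) (u j)) (v j)
      = map (\<lambda>x. (Some x, None)) (take (c i) (u i)) @ zip (map Some (drop (c j) (u j))) (map Some (v j))"
    using padL_longer[of "v j" "take (c i) (u i) @ drop (c j) (u j)"] uvj(2) uv ij(1)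
    unfolding c_def u_def v_def by auto
  moreover have "padL (u j) (v j)
      = map (\<lambda>x. (Some x, None)) (take (c j) (u j)) @ zip (map Some (drop (c j) (u j))) (map Some (v j))"
    using padL_longer uvj(2) unfolding c_def by blast
  ultimately have "padL (take (c i) (u i) @ drop (c j) (u j)) (v j) \<in> M"
    using uvj(1) ij(4) unfolding M state_def by simp
  then show ?thesis
    using that ij uvi uvj unfolding c_def by blast
qed

lemma gen_langE:
  assumes "gen_lang Sc m A L" "x \<in> Sc"
  obtains u where "u \<in> L" "evalw m u = x"
proof -
  have "x \<in> evalw m ` L"
    using assms unfolding gen_lang_def by simp
  then show ?thesis
    using that by blast
qed

lemma evalw_snoc: "xs \<noteq> [] \<Longrightarrow> evalw m (xs @ [y]) = m (evalw m xs) y"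
  by (cases xs) auto

definition spell :: "'g list set list \<Rightarrow> 'g list" where
  "spell u = concat (map some_elem u)"

lemma spell_append [simp]: "spell (u @ v) = spell u @ spell v"
  by (simp add: spell_def)

locale sgp_presentation =
  fixes R :: "('g list \<times> 'g list) set"
  assumes relator_sides_nonempty: "(u, v) \<in> R \<Longrightarrow> u \<noteq> [] \<and> v \<noteq> []"
begin

definition cls :: "'g list \<Rightarrow> 'g list set" where
  "cls w = pres_cong R `` {w}"

lemma pres_cong_nonempty: "(u, v) \<in> pres_cong R \<Longrightarrow> u \<noteq> [] \<and> v \<noteq> []"
  by (induction rule: pres_cong.induct) (auto dest: relator_sides_nonempty)

lemma pres_cong_append:
  assumes "(u, u') \<in> pres_cong R" "(v, v') \<in> pres_cong R"
  shows "(u @ v, u' @ v') \<in> pres_cong R"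
  using pres_cong.ctx[OF assms(1), of "[]" v] pres_cong.ctx[OF assms(2), of u' "[]"]
  by (simp add: pres_cong.trans)

lemma cls_eq_iff:
  assumes "u \<noteq> []"
  shows "cls u = cls v \<longleftrightarrow> (u, v) \<in> pres_cong R"
proof
  assume "cls u = cls v"
  then have "(v, u) \<in> pres_cong R"
    using pres_cong.refl[OF assms] by (auto simp: cls_def)
  then show "(u, v) \<in> pres_cong R"
    by (rule pres_cong.sym)
next
  assume uv: "(u, v) \<in> pres_cong R"
  show "cls u = cls v"
    unfolding cls_def using pres_cong.trans[OF uv] pres_cong.trans[OF pres_cong.sym[OF uv]] by blast
qed

lemma sgp_carrier_iff: "X \<in> sgp_carrier R \<longleftrightarrow> (\<exists>w. w \<noteq> [] \<and> X = cls w)"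
  by (auto simp: sgp_carrier_def cls_def)

lemma cls_carrier: "w \<noteq> [] \<Longrightarrow> cls w \<in> sgp_carrier R"
  unfolding sgp_carrier_iff by blast

lemma some_elem_cls: "w \<noteq> [] \<Longrightarrow> (w, some_elem (cls w)) \<in> pres_cong R"
  using someI[of "\<lambda>x. x \<in> cls w" w] pres_cong.refl[of w R] by (simp add: cls_def some_elem_def)

lemma some_elem_carrier:
  assumes "X \<in> sgp_carrier R"
  shows "some_elem X \<noteq> [] \<and> cls (some_elem X) = X"
proof -
  obtain w where w: "w \<noteq> []" "X = cls w"
    using assms unfolding sgp_carrier_iff by blast
  then show ?thesis
    using some_elem_cls[OF w(1)] pres_cong_nonempty cls_eq_iff by metis
qed

lemma sgp_mult_cls:
  assumes "u \<noteq> []" "v \<noteq> []"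
  shows "sgp_mult R (cls u) (cls v) = cls (u @ v)"
proof -
  have "sgp_mult R (cls u) (cls v) = cls (some_elem (cls u) @ some_elem (cls v))"
    by (simp add: sgp_mult_def cls_def some_elem_def)
  also have "\<dots> = cls (u @ v)"
    using pres_cong_append[OF some_elem_cls some_elem_cls] assms by (metis Nil_is_append_conv cls_eq_iff)
  finally show ?thesis .
qed

lemma evalw_carrier:
  assumes "xs \<noteq> []" "set xs \<subseteq> sgp_carrier R"
  shows "spell xs \<noteq> [] \<and> evalw (sgp_mult R) xs = cls (spell xs)"
  using assms
proof (induction xs rule: rev_induct)
  case (snoc y xs)
  have y: "some_elem y \<noteq> []" "cls (some_elem y) = y"
    using some_elem_carrier snoc.prems by auto
  show ?case
  proof (cases "xs = []")
    case False
    then show ?thesis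
      using snoc y sgp_mult_cls[of "spell xs" "some_elem y"] by (simp add: evalw_snoc spell_def)
  qed (use y in \<open>simp add: spell_def\<close>)
qed simp

lemma sgp_mult_cls_carrier:
  assumes "w \<noteq> []" "X \<in> sgp_carrier R"
  shows "sgp_mult R (cls w) X = cls (w @ some_elem X)"
  using sgp_mult_cls[OF assms(1)] some_elem_carrier[OF assms(2)] by metis

lemma evalw_gen_lang:
  assumes "gen_lang (sgp_carrier R) (sgp_mult R) A L" "u \<in> L"
  shows "spell u \<noteq> [] \<and> evalw (sgp_mult R) u = cls (spell u)"
proof (rule evalw_carrier)
  show "u \<noteq> []" "set u \<subseteq> sgp_carrier R"
    using assms unfolding gen_lang_def by auto
qed

lemma evalw_letters: "w \<noteq> [] \<Longrightarrow> evalw (sgp_mult R) (map (\<lambda>g. cls [g]) w) = cls w"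
proof (induction w rule: rev_induct)
  case (snoc g w)
  then show ?case
    by (cases "w = []") (simp_all add: evalw_snoc sgp_mult_cls)
qed simp

end

section \<open>Normal forms for \<open>a\<^sup>k b = b\<close>\<close>

interpretation akb: sgp_presentation "rel_akb k" for k
  by unfold_locales (auto simp: rel_akb_def)

abbreviation akb_cong :: "nat \<Rightarrow> (bool list \<times> bool list) set" where
  "akb_cong k \<equiv> pres_cong (rel_akb k)"

abbreviation akb_mult :: "nat \<Rightarrow> bool list set \<Rightarrow> bool list set \<Rightarrow> bool list set" where
  "akb_mult k \<equiv> sgp_mult (rel_akb k)"

abbreviation akb_carrier :: "nat \<Rightarrow> bool list set set" where
  "akb_carrier k \<equiv> sgp_carrier (rel_akb k)"

text \<open>Generators are encoded as \<open>a = True\<close> and \<open>b = False\<close>; \<open>a_run acc w\<close> is the length of the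
  final block of \<open>a\<close>'s of \<open>replicate acc True @ w\<close>.\<close>
definition a_run :: "nat \<Rightarrow> bool list \<Rightarrow> nat" where
  "a_run acc w = foldl (\<lambda>c x. if x then Suc c else 0) acc w"

lemma a_run_append [simp]: "a_run acc (u @ v) = a_run (a_run acc u) v"
  by (simp add: a_run_def)

lemma a_run_simps [simp]:
  "a_run acc [] = acc" "a_run acc (True # w) = a_run (Suc acc) w" "a_run acc (False # w) = a_run 0 w"
  by (simp_all add: a_run_def)

lemma a_run_replicate_True [simp]: "a_run acc (replicate n True) = acc + n"
  by (induction n arbitrary: acc) auto

lemma a_run_replicate_False [simp]: "a_run 0 (replicate n False) = 0"
  by (induction n) auto

lemma a_run_le: "a_run acc w \<le> acc + length w"
proof (induction w arbitrary: acc)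
  case (Cons x w)
  then show ?case
    using Cons.IH[of "Suc acc"] Cons.IH[of 0] by (cases x) auto
qed simp

lemma a_run_le_length: "False \<in> set w \<Longrightarrow> a_run acc w \<le> length w"
proof (induction w arbitrary: acc)
  case (Cons x w)
  then show ?case
    using a_run_le[of 0 w] by (cases x) (auto simp: le_Suc_eq)
qed simp

lemma length_concat_map_le: "\<forall>x\<in>set xs. length (f x) \<le> D \<Longrightarrow> length (concat (map f xs)) \<le> D * length xs"
  by (induction xs) auto

lemma b_free_suffix:
  assumes len: "\<forall>x\<in>set u. length (f x) \<le> D" and run: "D * m < a_run 0 (concat (map f u))"
  shows "False \<notin> set (concat (map f (drop (length u - m) u)))"
proof
  let ?s = "drop (length u - m) u"
  assume b: "False \<in> set (concat (map f ?s))"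
  have "a_run 0 (concat (map f u))
      = a_run (a_run 0 (concat (map f (take (length u - m) u)))) (concat (map f ?s))"
    by (metis a_run_append append_take_drop_id concat_append map_append)
  also have "\<dots> \<le> length (concat (map f ?s))"
    using a_run_le_length[OF b] .
  also have "\<dots> \<le> D * length ?s"
    using len by (intro length_concat_map_le) (auto dest: in_set_dropD)
  also have "\<dots> \<le> D * m"
    by (intro mult_le_mono2) simp
  finally show False
    using run by simp
qed

lemma count_list_replicate [simp]: "count_list (replicate n x) y = (if x = y then n else 0)"
  by (induction n) auto

lemma akb_cong_invariants:
  "(u, v) \<in> akb_cong k \<Longrightarrow> count_list u False = count_list v False \<and> (\<forall>acc. a_run acc u = a_run acc v)"
  by (induction rule: pres_cong.induct) (auto simp: rel_akb_def)

lemma akb_cong_replicate_mult_add: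
  "(replicate (k * q + r) True @ [False], replicate r True @ [False]) \<in> akb_cong k"
proof (induction q)
  case (Suc q)
  have "(replicate (k * q + r) True @ (replicate k True @ [False]) @ [],
         replicate (k * q + r) True @ [False] @ []) \<in> akb_cong k"
    by (intro pres_cong.ctx pres_cong.gen) (simp add: rel_akb_def)
  moreover have "replicate (k * Suc q + r) True = replicate (k * q + r) True @ replicate k True"
    by (simp add: algebra_simps flip: replicate_add)
  ultimately have "(replicate (k * Suc q + r) True @ [False], replicate (k * q + r) True @ [False]) \<in> akb_cong k"
    by simp
  then show ?case
    using Suc pres_cong.trans by blast
qed (simp add: pres_cong.refl)

lemma akb_cong_replicate_mod: "(replicate n True @ [False], replicate (n mod k) True @ [False]) \<in> akb_cong k"
  using akb_cong_replicate_mult_add[of k "n div k" "n mod k"] by simp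

lemma akb_cong_absorb:
  assumes "False \<in> set y"
  shows "(replicate (k * q) True @ y, y) \<in> akb_cong k"
proof -
  obtain p z where y: "y = p @ False # z" "False \<notin> set p"
    using split_list_first[OF assms] by blast
  then have "p = replicate (length p) True"
    by (metis (full_types) replicate_eqI)
  then show ?thesis
    using pres_cong.ctx[OF akb_cong_replicate_mult_add[of k q "length p"], where p = "[]" and q = z] y(1)
    by (simp add: replicate_add)
qed

text \<open>\<open>reduced k acc w\<close>: no \<open>b\<close> of \<open>replicate acc True @ w\<close> is preceded by \<open>k\<close> consecutive \<open>a\<close>'s.
  \<open>reduce k acc w\<close> is the normal form of \<open>replicate acc True @ w\<close>.\<close>
fun reduced :: "nat \<Rightarrow> nat \<Rightarrow> bool list \<Rightarrow> bool" where
  "reduced k acc [] = True"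
| "reduced k acc (x # w) = (if x then reduced k (Suc acc) w else acc < k \<and> reduced k 0 w)"

fun reduce :: "nat \<Rightarrow> nat \<Rightarrow> bool list \<Rightarrow> bool list" where
  "reduce k acc [] = replicate acc True"
| "reduce k acc (x # w) =
    (if x then reduce k (Suc acc) w else replicate (acc mod k) True @ False # reduce k 0 w)"

lemma reduced_replicate_append: "reduced k acc (replicate n True @ w) = reduced k (acc + n) w"
  by (induction n arbitrary: acc) auto

lemma reduce_replicate_append: "reduce k acc (replicate n True @ w) = reduce k (acc + n) w"
  by (induction n arbitrary: acc) auto

lemma reduced_append: "reduced k acc (u @ v) \<longleftrightarrow> reduced k acc u \<and> reduced k (a_run acc u) v"
  by (induction u arbitrary: acc) auto

lemma reduced_replicate_True: "reduced k acc (replicate n True)"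
  by (induction n arbitrary: acc) auto

lemma reduced_reduce: "k \<ge> 1 \<Longrightarrow> reduced k 0 (reduce k acc w)"
  by (induction w arbitrary: acc) (auto simp: reduced_replicate_append reduced_replicate_True)

lemma reduce_reduced: "reduced k acc w \<Longrightarrow> reduce k acc w = replicate acc True @ w"
  by (induction w arbitrary: acc) (auto simp: replicate_app_Cons_same)

lemma reduce_nonempty: "0 < acc \<or> w \<noteq> [] \<Longrightarrow> reduce k acc w \<noteq> []"
  by (induction w arbitrary: acc) auto

lemma reduce_akb_cong: "(u, v) \<in> akb_cong k \<Longrightarrow> reduce k acc (u @ q) = reduce k acc (v @ q)"
proof (induction arbitrary: acc q rule: pres_cong.induct)
  case (gen u v)
  then show ?case
    by (auto simp: rel_akb_def reduce_replicate_append)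
next
  case (ctx u v p q')
  then show ?case
    by (induction p arbitrary: acc) auto
qed simp_all

lemma akb_cong_reduce: "replicate acc True @ w \<noteq> [] \<Longrightarrow> (replicate acc True @ w, reduce k acc w) \<in> akb_cong k"
proof (induction w arbitrary: acc)
  case Nil
  then show ?case by (simp add: pres_cong.refl)
next
  case (Cons x w)
  show ?case
  proof (cases x)
    case True
    then show ?thesis
      using Cons.IH[of "Suc acc"] by (simp add: replicate_app_Cons_same)
  next
    case False
    have mod: "(replicate acc True @ [False], replicate (acc mod k) True @ [False]) \<in> akb_cong k"
      by (rule akb_cong_replicate_mod)
    show ?thesis
    proof (cases "w = []")
      case True
      then show ?thesis using False mod by simp
    next
      case w: False
      have "((replicate acc True @ [False]) @ w, (replicate (acc mod k) True @ [False]) @ reduce k 0 w)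
          \<in> akb_cong k"
        using akb.pres_cong_append[OF mod] Cons.IH[of 0] w by simp
      then show ?thesis using False by simp
    qed
  qed
qed

lemma reduce_eqI: "reduced k 0 v \<Longrightarrow> (w, v) \<in> akb_cong k \<Longrightarrow> reduce k 0 w = v"
  using reduce_akb_cong[of w v k 0 "[]"] reduce_reduced by simp

lemma split_a_run: "\<exists>x. w = x @ replicate (a_run 0 w) True \<and> a_run 0 x = 0"
proof (induction w rule: rev_induct)
  case (snoc y w)
  define r where "r = a_run 0 w"
  obtain x where x: "w = x @ replicate r True" "a_run 0 x = 0"
    using snoc.IH unfolding r_def by blast
  show ?case
  proof (cases y)
    case True
    then have "w @ [y] = x @ replicate (a_run 0 (w @ [y])) True"
      using x by (simp add: r_def[symmetric] replicate_append_same)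
    then show ?thesis using x(2) by blast
  next
    case False
    then show ?thesis by (intro exI[of _ "w @ [y]"]) simp
  qed
qed simp

lemma reduce_append_b:
  assumes "reduced k 0 x" "a_run 0 x + n mod k < k"
  shows "reduce k 0 (x @ replicate n True @ [False]) = x @ replicate (n mod k) True @ [False]"
proof (rule reduce_eqI)
  show "reduced k 0 (x @ replicate (n mod k) True @ [False])"
    using assms by (simp add: reduced_append reduced_replicate_append reduced_replicate_True)
  show "(x @ replicate n True @ [False], x @ replicate (n mod k) True @ [False]) \<in> akb_cong k"
    using pres_cong.ctx[OF akb_cong_replicate_mod, where p = x and q = "[]"] by simp
qed

section \<open>A prefix-automatic structure\<close>

definition gen :: "nat \<Rightarrow> bool \<Rightarrow> bool list set" where
  "gen k x = akb.cls k [x]"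

definition diag :: "nat \<Rightarrow> bool \<Rightarrow> bool list set option \<times> bool list set option" where
  "diag k x = (Some (gen k x), Some (gen k x))"

definition nf_words :: "nat \<Rightarrow> bool list set" where
  "nf_words k = {w. reduced k 0 w \<and> w \<noteq> []}"

definition nf_lang :: "nat \<Rightarrow> bool list set list set" where
  "nf_lang k = map (gen k) ` nf_words k"

definition short_run_words :: "nat \<Rightarrow> bool list set" where
  "short_run_words k = {w. reduced k 0 w \<and> a_run 0 w < k}"

lemma gen_carrier: "gen k x \<in> akb_carrier k"
  unfolding gen_def by (simp add: akb.cls_carrier)

lemma inj_gen: "inj (gen k)"
proof (rule injI)
  fix x y
  assume "gen k x = gen k y"
  then have "([x], [y]) \<in> akb_cong k"
    using akb.cls_eq_iff[of "[x]" k "[y]"] unfolding gen_def by simp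
  then show "x = y"
    using akb_cong_invariants[of "[x]" "[y]" k] by (cases x; cases y) simp_all
qed

lemma inj_diag: "inj (diag k)"
  using inj_gen unfolding diag_def inj_def by simp

lemma evalw_gen: "w \<noteq> [] \<Longrightarrow> evalw (akb_mult k) (map (gen k) w) = akb.cls k w"
  using akb.evalw_letters unfolding gen_def by blast

lemma rmul_gen: "w \<noteq> [] \<Longrightarrow> rmul (akb_mult k) (akb.cls k w) (Some (gen k x)) = akb.cls k (w @ [x])"
  by (simp add: rmul_def gen_def akb.sgp_mult_cls)

lemma padR_map_gen_same: "padR (map (gen k) w) (map (gen k) w) = map (diag k) w"
  by (simp add: padR_same diag_def)

lemma padR_map_gen_snoc: "padR (map (gen k) w) (map (gen k) w @ [gen k x]) = map (diag k) w @ [(None, Some (gen k x))]"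
  by (simp add: padR_snoc diag_def)

lemma padR_map_gen_collapse:
  "padR (map (gen k) (x @ replicate (Suc t) True)) (map (gen k) (x @ [False]))
    = map (diag k) x @ [(Some (gen k True), Some (gen k False))] @ replicate t (Some (gen k True), None)"
  by (simp add: padR_append_same diag_def)

lemma regular_reduced_run: "regular {w. P (reduced k 0 w) (w \<noteq> []) (min (a_run 0 w) k)}"
proof -
  define \<delta> :: "bool \<times> bool \<times> nat \<Rightarrow> bool \<Rightarrow> bool \<times> bool \<times> nat" where
    "\<delta> s x = (case s of (ok, _, r) \<Rightarrow> if x then (ok, True, min (Suc r) k) else (ok \<and> r < k, True, 0))" for s x
  have run: "foldl \<delta> (ok, ne, min acc k) w = (ok \<and> reduced k acc w, ne \<or> w \<noteq> [], min (a_run acc w) k)"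
    for ok ne acc w
  proof (induction w arbitrary: ok ne acc)
    case (Cons x w)
    have "\<delta> (ok, ne, min acc k) x = (if x then (ok, True, min (Suc acc) k) else (ok \<and> acc < k, True, min 0 k))"
      by (auto simp: \<delta>_def)
    then show ?case
      using Cons.IH[of "ok \<and> acc < k" True 0] Cons.IH[of ok True "Suc acc"] by auto
  qed simp
  have "regular {w. foldl \<delta> (True, False, 0) w \<in> {(ok, ne, r). P ok ne r}}"
    by (rule regularI[where Q = "UNIV \<times> UNIV \<times> {..k}"]) (auto simp: \<delta>_def)
  then show ?thesis
    using run[of True False 0] by simp
qed

lemma regular_nf_words: "regular (nf_words k)"
  unfolding nf_words_def using regular_reduced_run[where P = "\<lambda>ok ne r. ok \<and> ne"] by simp

lemma regular_short_run_words: "regular (short_run_words k)"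
  unfolding short_run_words_def using regular_reduced_run[where P = "\<lambda>ok ne r. ok \<and> r < k" and k = k] by (simp add: min_less_iff_disj)

lemma regular_nonempty_short_run_words: "regular {w \<in> short_run_words k. w \<noteq> []}"
  unfolding short_run_words_def using regular_reduced_run[where P = "\<lambda>ok ne r. ok \<and> ne \<and> r < k" and k = k]
  by (simp add: conj_ac min_less_iff_disj)

lemma evalw_nf_lang:
  assumes "k \<ge> 1"
  shows "evalw (akb_mult k) ` nf_lang k = akb_carrier k"
proof (intro set_eqI iffI)
  fix X
  assume "X \<in> evalw (akb_mult k) ` nf_lang k"
  then show "X \<in> akb_carrier k"
    unfolding nf_lang_def nf_words_def akb.sgp_carrier_iff by (auto simp: evalw_gen)
next
  fix X
  assume "X \<in> akb_carrier k"
  then obtain w where w: "w \<noteq> []" "X = akb.cls k w"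
    unfolding akb.sgp_carrier_iff by blast
  have "reduce k 0 w \<in> nf_words k"
    using reduced_reduce[OF assms] reduce_nonempty w(1) unfolding nf_words_def by blast
  moreover have "X = akb.cls k (reduce k 0 w)"
    using akb_cong_reduce[of 0 w k] akb.cls_eq_iff w by simp
  ultimately show "X \<in> evalw (akb_mult k) ` nf_lang k"
    unfolding nf_lang_def nf_words_def by (auto simp: evalw_gen intro!: image_eqI)
qed

lemma gen_lang_nf_lang:
  assumes "k \<ge> 1"
  shows "gen_lang (akb_carrier k) (akb_mult k) (range (gen k)) (nf_lang k)"
  unfolding gen_lang_def
  using gen_carrier evalw_nf_lang[OF assms] regular_map_image[OF regular_nf_words inj_gen]
  by (auto simp: nf_lang_def nf_words_def)

text \<open>Here \<open>a\<close> acts on elements by appending \<open>xs\<close>, so this covers \<open>None\<close>, \<open>a\<close> and \<open>b\<close> at once.\<close>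
lemma LR_nf_lang:
  assumes k: "k \<ge> 1"
    and a: "\<And>w. w \<noteq> [] \<Longrightarrow> rmul (akb_mult k) (akb.cls k w) a = akb.cls k (w @ xs)"
  shows "LR (akb_mult k) (nf_lang k) a
    = (\<lambda>w. padR (map (gen k) w) (map (gen k) (reduce k 0 (w @ xs)))) ` nf_words k"
proof (intro set_eqI iffI)
  fix p
  assume "p \<in> LR (akb_mult k) (nf_lang k) a"
  then obtain w v where w: "w \<in> nf_words k" and v: "v \<in> nf_words k"
    and p: "p = padR (map (gen k) w) (map (gen k) v)"
    and eq: "rmul (akb_mult k) (akb.cls k w) a = akb.cls k v"
    unfolding LR_def nf_lang_def nf_words_def by (auto simp: evalw_gen)
  have "(w @ xs, v) \<in> akb_cong k"
    using eq a[of w] w akb.cls_eq_iff[of "w @ xs" k v] unfolding nf_words_def by simp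
  then have "reduce k 0 (w @ xs) = v"
    using v reduce_eqI unfolding nf_words_def by blast
  then show "p \<in> (\<lambda>w. padR (map (gen k) w) (map (gen k) (reduce k 0 (w @ xs)))) ` nf_words k"
    using w p by blast
next
  fix p
  assume "p \<in> (\<lambda>w. padR (map (gen k) w) (map (gen k) (reduce k 0 (w @ xs)))) ` nf_words k"
  then obtain w where w: "w \<in> nf_words k"
    and p: "p = padR (map (gen k) w) (map (gen k) (reduce k 0 (w @ xs)))" by blast
  have ne: "w \<noteq> []" "w @ xs \<noteq> []"
    using w unfolding nf_words_def by simp_all
  have v: "reduce k 0 (w @ xs) \<in> nf_words k"
    using reduced_reduce[OF k] reduce_nonempty ne unfolding nf_words_def by blast
  have "akb.cls k (w @ xs) = akb.cls k (reduce k 0 (w @ xs))"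
    using akb_cong_reduce[of 0 "w @ xs" k] akb.cls_eq_iff ne by simp
  then have "rmul (akb_mult k) (evalw (akb_mult k) (map (gen k) w)) a
      = evalw (akb_mult k) (map (gen k) (reduce k 0 (w @ xs)))"
    using a ne v evalw_gen unfolding nf_words_def by simp
  then show "p \<in> LR (akb_mult k) (nf_lang k) a"
    unfolding LR_def nf_lang_def using w v p by blast
qed

lemma LR_None_nf_lang:
  assumes "k \<ge> 1"
  shows "LR (akb_mult k) (nf_lang k) None = map (diag k) ` nf_words k"
  using LR_nf_lang[OF assms, of None "[]"]
  by (auto simp: rmul_def nf_words_def reduce_reduced padR_map_gen_same)

lemma LR_gen_True_nf_lang:
  assumes "k \<ge> 1"
  shows "LR (akb_mult k) (nf_lang k) (Some (gen k True))
    = {x @ [(None, Some (gen k True))] @ z | x z. x \<in> map (diag k) ` nf_words k \<and> z \<in> {[]}}"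
proof -
  have "padR (map (gen k) w) (map (gen k) (reduce k 0 (w @ [True])))
      = map (diag k) w @ [(None, Some (gen k True))]" if "w \<in> nf_words k" for w
    using that by (simp add: nf_words_def reduce_reduced reduced_append padR_snoc diag_def)
  then show ?thesis
    using LR_nf_lang[OF assms, of "Some (gen k True)" "[True]"] by (auto simp: rmul_gen)
qed

text \<open>The right multiples by \<open>b\<close>: either \<open>b\<close> is appended to a normal form whose final \<open>a\<close>-run is
  shorter than \<open>k\<close>, or a final run \<open>a\<^sup>r\<^sup>+\<^sup>t\<^sup>+\<^sup>1\<close> with \<open>k\<close> dividing \<open>t + 1\<close> collapses to \<open>a\<^sup>r b\<close>.\<close>
definition b_step_lang :: "nat \<Rightarrow> (bool list set option \<times> bool list set option) list set" where
  "b_step_lang k =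
     {x @ [(None, Some (gen k False))] @ z | x z.
        x \<in> map (diag k) ` {w \<in> short_run_words k. w \<noteq> []} \<and> z \<in> {[]}}
   \<union> {x @ [(Some (gen k True), Some (gen k False))] @ z | x z.
        x \<in> map (diag k) ` short_run_words k \<and>
        z \<in> {replicate t (Some (gen k True), None) | t. k dvd Suc t}}"

lemma regular_b_step_lang:
  assumes "k \<ge> 1"
  shows "regular (b_step_lang k)"
proof -
  have "gen k True \<noteq> gen k False"
    using inj_gen[of k] by (auto dest: injD)
  then have "\<forall>x \<in> map (diag k) ` X. (Some (gen k True), Some (gen k False)) \<notin> set x" for X
    by (auto simp: diag_def)
  moreover have "\<forall>x \<in> map (diag k) ` X. (None, Some (gen k False)) \<notin> set x" for X
    by (auto simp: diag_def)
  moreover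
  have "regular {replicate t (Some (gen k True), None) | t. k dvd Suc t}"
    using regular_replicate_mod[of k _ "\<lambda>r. k dvd Suc r"] assms by (simp add: dvd_eq_mod_eq_0 mod_Suc_eq)
  ultimately show ?thesis
    unfolding b_step_lang_def
    by (intro regular_Un regular_append_marker regular_Nil
        regular_map_image[OF regular_short_run_words inj_diag]
        regular_map_image[OF regular_nonempty_short_run_words inj_diag]) (auto simp: diag_def)
qed

lemma padR_reduce_b_mem_b_step_lang:
  assumes k: "k \<ge> 1" and w: "w \<in> nf_words k"
  shows "padR (map (gen k) w) (map (gen k) (reduce k 0 (w @ [False]))) \<in> b_step_lang k"
proof -
  define j where "j = a_run 0 w"
  obtain x where x: "w = x @ replicate j True" "a_run 0 x = 0"
    using split_a_run unfolding j_def by blast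
  have x_reduced: "reduced k 0 x"
    using w x(1) by (simp add: nf_words_def reduced_append)
  have reduce_wb: "reduce k 0 (w @ [False]) = x @ replicate (j mod k) True @ [False]"
    using reduce_append_b[OF x_reduced, of j] x k by simp
  show ?thesis
  proof (cases "j < k")
    case True
    then have "w \<in> {w \<in> short_run_words k. w \<noteq> []}"
      using w unfolding nf_words_def short_run_words_def j_def by simp
    moreover have "reduce k 0 (w @ [False]) = w @ [False]"
      using reduce_wb x(1) True by simp
    then have "padR (map (gen k) w) (map (gen k) (reduce k 0 (w @ [False])))
        = map (diag k) w @ [(None, Some (gen k False))] @ []"
      by (simp add: padR_map_gen_snoc)
    ultimately show ?thesis
      unfolding b_step_lang_def by blast
  next
    case False
    define t where "t = j - j mod k - 1"
    have "0 < k * (j div k)"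
      using False k by (simp add: div_greater_zero_iff)
    then have "Suc t = k * (j div k)"
      unfolding t_def by (simp add: minus_mod_eq_mult_div)
    then have "k dvd Suc t" and j: "j = j mod k + Suc t"
      by (simp_all add: mod_mult_div_eq)
    define x' where "x' = x @ replicate (j mod k) True"
    have w': "w = x' @ replicate (Suc t) True"
      using x(1) j unfolding x'_def by (metis append.assoc replicate_add)
    have "x' \<in> short_run_words k"
      using w w' x(2) k unfolding x'_def short_run_words_def nf_words_def by (simp add: reduced_append)
    moreover have "reduce k 0 (w @ [False]) = x' @ [False]"
      using reduce_wb unfolding x'_def by simp
    then have "padR (map (gen k) w) (map (gen k) (reduce k 0 (w @ [False])))
        = map (diag k) x' @ [(Some (gen k True), Some (gen k False))] @ replicate t (Some (gen k True), None)"
      using w' padR_map_gen_collapse by simp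
    ultimately show ?thesis
      unfolding b_step_lang_def using \<open>k dvd Suc t\<close> by force
  qed
qed

lemma LR_gen_False_nf_lang:
  assumes k: "k \<ge> 1"
  shows "LR (akb_mult k) (nf_lang k) (Some (gen k False)) = b_step_lang k"
proof -
  have LR: "LR (akb_mult k) (nf_lang k) (Some (gen k False))
      = (\<lambda>w. padR (map (gen k) w) (map (gen k) (reduce k 0 (w @ [False])))) ` nf_words k"
    using LR_nf_lang[OF k] by (simp add: rmul_gen)
  have "p \<in> LR (akb_mult k) (nf_lang k) (Some (gen k False))" if p: "p \<in> b_step_lang k" for p
  proof -
    consider x where "x \<in> short_run_words k" "x \<noteq> []" "p = map (diag k) x @ [(None, Some (gen k False))]"
      | x t where "x \<in> short_run_words k" "k dvd Suc t"
        "p = map (diag k) x @ [(Some (gen k True), Some (gen k False))] @ replicate t (Some (gen k True), None)"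
      using p unfolding b_step_lang_def by auto
    then show ?thesis
    proof cases
      case (1 x)
      then have "x \<in> nf_words k" "reduce k 0 (x @ [False]) = x @ [False]"
        using reduce_append_b[of k x 0] unfolding short_run_words_def nf_words_def by simp_all
      then show ?thesis
        unfolding LR using 1(3) padR_map_gen_snoc[of k x False] by force
    next
      case (2 x t)
      then have "x @ replicate (Suc t) True \<in> nf_words k"
        "reduce k 0 ((x @ replicate (Suc t) True) @ [False]) = x @ [False]"
        using reduce_append_b[of k x "Suc t"] unfolding short_run_words_def nf_words_def
        by (simp_all add: reduced_append reduced_replicate_True)
      moreover have "p = padR (map (gen k) (x @ replicate (Suc t) True))
          (map (gen k) (reduce k 0 ((x @ replicate (Suc t) True) @ [False])))"
        using 2(3) calculation(2) padR_map_gen_collapse[of k x t] by simp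
      ultimately show ?thesis
        unfolding LR by blast
    qed
  qed
  then show ?thesis
    using padR_reduce_b_mem_b_step_lang[OF k] unfolding LR by blast
qed

lemma prefix_lang_eq_LR_None:
  assumes pref: "\<And>v. v \<in> Pref L \<Longrightarrow> v \<noteq> [] \<Longrightarrow> v \<in> L" and nonempty: "[] \<notin> L"
  shows "{padR u v | u v. u \<in> L \<and> v \<in> Pref L \<and> v \<noteq> [] \<and> evalw m u = evalw m v} = LR m L None"
proof -
  have "L \<subseteq> Pref L"
    unfolding Pref_def by blast
  then show ?thesis
    unfolding LR_def rmul_def using pref nonempty by (auto 0 4)
qed

lemma Pref_nf_lang: "v \<in> Pref (nf_lang k) \<Longrightarrow> v \<noteq> [] \<Longrightarrow> v \<in> nf_lang k"
proof -
  assume "v \<in> Pref (nf_lang k)" "v \<noteq> []"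
  then obtain w s where w: "w \<in> nf_words k" "map (gen k) w = v @ s"
    unfolding Pref_def nf_lang_def by blast
  define w' where "w' = take (length v) w"
  have v: "v = map (gen k) w'"
    using arg_cong[OF w(2), of "take (length v)"] unfolding w'_def by (simp add: take_map)
  have "reduced k 0 (w' @ drop (length v) w)"
    using w(1) unfolding w'_def nf_words_def by simp
  then have "w' \<in> nf_words k"
    using v \<open>v \<noteq> []\<close> unfolding nf_words_def by (auto simp: reduced_append)
  then show "v \<in> nf_lang k"
    unfolding nf_lang_def v by blast
qed

theorem prefix_automatic_akb:
  assumes k: "k \<ge> 1"
  shows "prefix_automatic (akb_carrier k) (akb_mult k)"
proof -
  have diag_regular: "regular (map (diag k) ` nf_words k)"
    by (rule regular_map_image[OF regular_nf_words inj_diag])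
  have "regular (LR (akb_mult k) (nf_lang k) a)" if "a \<in> insert None (Some ` range (gen k))" for a
  proof -
    from that obtain x where "a = None \<or> a = Some (gen k x)"
      by blast
    then consider "a = None" | "a = Some (gen k True)" | "a = Some (gen k False)"
      by (cases x) auto
    then show ?thesis
    proof cases
      case 1
      then show ?thesis using LR_None_nf_lang[OF k] diag_regular by simp
    next
      case 2
      have "\<forall>x \<in> map (diag k) ` nf_words k. (None, Some (gen k True)) \<notin> set x"
        by (auto simp: diag_def)
      then show ?thesis
        using 2 LR_gen_True_nf_lang[OF k] regular_append_marker[OF diag_regular regular_Nil] by simp
    next
      case 3
      then show ?thesis using LR_gen_False_nf_lang[OF k] regular_b_step_lang[OF k] by simp
    qed
  qed
  then have "automatic_structure (akb_carrier k) (akb_mult k) (range (gen k)) (nf_lang k)"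
    unfolding automatic_structure_def using gen_lang_nf_lang[OF k] by blast
  moreover have "[] \<notin> nf_lang k"
    unfolding nf_lang_def nf_words_def by auto
  moreover have "regular {padR u v | u v. u \<in> nf_lang k \<and> v \<in> Pref (nf_lang k) \<and> v \<noteq> []
      \<and> evalw (akb_mult k) u = evalw (akb_mult k) v}"
    using prefix_lang_eq_LR_None[OF Pref_nf_lang \<open>[] \<notin> nf_lang k\<close>] LR_None_nf_lang[OF k] diag_regular
    by simp
  ultimately show ?thesis
    unfolding prefix_automatic_def by blast
qed

section \<open>No biautomatic structure\<close>

lemma generator_with_b:
  assumes gl: "gen_lang (akb_carrier k) (akb_mult k) A L"
  obtains h where "h \<in> A" "False \<in> set (some_elem h)"
proof -
  obtain w where w: "w \<in> L" "evalw (akb_mult k) w = akb.cls k [False]"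
    using gen_langE[OF gl akb.cls_carrier[where w = "[False]"]] by auto
  then have "akb.cls k [False] = akb.cls k (spell w)"
    using akb.evalw_gen_lang[OF gl w(1)] by simp
  then have "([False], spell w) \<in> akb_cong k"
    using akb.cls_eq_iff by blast
  then have "count_list (spell w) False = 1"
    using akb_cong_invariants by fastforce
  then have "False \<in> set (spell w)"
    by (metis count_notin zero_neq_one)
  then obtain h where "h \<in> set w" "False \<in> set (some_elem h)"
    by (auto simp: spell_def)
  moreover have "set w \<subseteq> A"
    using gl w(1) unfolding gen_lang_def by auto
  ultimately show ?thesis
    using that by blast
qed

lemma b_count_cancel:
  assumes gl: "gen_lang (akb_carrier k) (akb_mult k) A L" and "u \<in> L" "u' \<in> L" "h \<in> A"
    and eq: "akb_mult k (evalw (akb_mult k) u) h = akb_mult k (evalw (akb_mult k) u') h"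
  shows "count_list (spell u) False = count_list (spell u') False"
proof -
  have h: "h \<in> akb_carrier k"
    using gl \<open>h \<in> A\<close> unfolding gen_lang_def by blast
  have "akb.cls k (spell u @ some_elem h) = akb.cls k (spell u' @ some_elem h)"
    using eq akb.evalw_gen_lang[OF gl] akb.sgp_mult_cls_carrier[OF _ h] assms(2,3) by metis
  then have "(spell u @ some_elem h, spell u' @ some_elem h) \<in> akb_cong k"
    using akb.cls_eq_iff akb.evalw_gen_lang[OF gl \<open>u \<in> L\<close>] by blast
  then show ?thesis
    using akb_cong_invariants by fastforce
qed

lemma LL_witness:
  assumes k: "k \<ge> 1" and gl: "gen_lang (akb_carrier k) (akb_mult k) A L"
    and h: "h \<in> A" "False \<in> set (some_elem h)" and "j \<ge> 1"
  obtains u v where "padL u v \<in> LL (akb_mult k) L (Some h)" "length v < length u"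
    "False \<notin> set (spell (drop (length u - length v) u))" "count_list (spell u) False = j"
proof -
  let ?m = "akb_mult k"
  have A: "finite A" "A \<subseteq> akb_carrier k" "\<forall>w\<in>L. w \<noteq> [] \<and> set w \<subseteq> A"
    using gl unfolding gen_lang_def by auto
  define D where "D = (\<Sum>X\<in>A. length (some_elem X))"
  have hne: "some_elem h \<noteq> []"
    using h(2) by auto
  obtain v where v: "v \<in> L" "evalw ?m v = akb.cls k (replicate j False @ some_elem h)"
    using gen_langE[OF gl akb.cls_carrier[where w = "replicate j False @ some_elem h"]] hne by auto
  define n where "n = k * Suc (D * length v)"
  have n: "D * length v < n"
    unfolding n_def using mult_le_mono1[OF k, of "Suc (D * length v)"] by simp
  obtain u where u: "u \<in> L" "evalw ?m u = akb.cls k (replicate j False @ replicate n True)"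
    using gen_langE[OF gl akb.cls_carrier[where w = "replicate j False @ replicate n True"]] \<open>j \<ge> 1\<close>
    by auto
  have "spell u \<noteq> []" "akb.cls k (spell u) = akb.cls k (replicate j False @ replicate n True)"
    using akb.evalw_gen_lang[OF gl u(1)] u(2) by auto
  then have U: "spell u \<noteq> []" "(spell u, replicate j False @ replicate n True) \<in> akb_cong k"
    using akb.cls_eq_iff by blast+
  then have counts: "count_list (spell u) False = j" "a_run 0 (spell u) = n"
    using akb_cong_invariants[OF U(2)] by (simp_all add: count_list_0_iff)
  have "(spell u @ some_elem h, replicate j False @ some_elem h) \<in> akb_cong k"
    using akb.pres_cong_append[OF U(2) pres_cong.refl[OF hne]]
      pres_cong.ctx[OF akb_cong_absorb[OF h(2), of k "Suc (D * length v)"], where p = "replicate j False" and q = "[]"]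
    unfolding n_def by (auto intro: pres_cong.trans)
  then have "akb.cls k (spell u @ some_elem h) = akb.cls k (replicate j False @ some_elem h)"
    using akb.cls_eq_iff U(1) by blast
  then have uv: "?m (evalw ?m u) h = evalw ?m v"
    using akb.evalw_gen_lang[OF gl u(1)] v(2) akb.sgp_mult_cls_carrier[OF U(1)] A(2) h(1) by auto
  have "\<forall>x\<in>set u. length (some_elem x) \<le> D"
    using A(1,3) u(1) unfolding D_def by (fastforce intro: member_le_sum[where f = "\<lambda>X. length (some_elem X)"])
  then have tail: "False \<notin> set (spell (drop (length u - length v) u))"
    using b_free_suffix[of u some_elem D "length v"] n counts(2) unfolding spell_def by simp
  have "length v < length u"
  proof (rule ccontr)
    assume "\<not> length v < length u"
    then show False
      using tail counts(1) \<open>j \<ge> 1\<close> count_list_0_iff by fastforce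
  qed
  then show ?thesis
    using that u(1) v(1) uv tail counts(1) unfolding padL_mem_LL_iff rmul_def by auto
qed

theorem not_biautomatic_akb:
  assumes k: "k \<ge> 1"
  shows "\<not> biautomatic (akb_carrier k) (akb_mult k)"
proof
  let ?m = "akb_mult k"
  assume "biautomatic (akb_carrier k) ?m"
  then obtain A L where gl: "gen_lang (akb_carrier k) ?m A L"
    and LL_regular: "\<forall>h\<in>A. regular (LL ?m L (Some h))"
    unfolding biautomatic_def by blast
  obtain h where h: "h \<in> A" "False \<in> set (some_elem h)"
    using generator_with_b[OF gl] by blast
  let ?P = "\<lambda>j u v. False \<notin> set (spell (drop (length u - length v) u)) \<and> count_list (spell u) False = j"
  have "\<forall>j\<in>{1..}. \<exists>u v. padL u v \<in> LL ?m L (Some h) \<and> length v \<le> length u \<and> ?P j u v"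
  proof
    fix j :: nat
    assume "j \<in> {1..}"
    obtain u v where "padL u v \<in> LL ?m L (Some h)" "length v < length u" "?P j u v"
    proof (rule LL_witness[OF k gl h])
      show "j \<ge> 1"
        using \<open>j \<in> {1..}\<close> by simp
    qed (auto intro: that)
    then show "\<exists>u v. padL u v \<in> LL ?m L (Some h) \<and> length v \<le> length u \<and> ?P j u v"
      by (intro exI[of _ u] exI[of _ v]) simp
  qed
  then show False
  proof (rule regular_padL_splice[OF LL_regular[rule_format, OF h(1)] infinite_Ici])
    fix i j :: nat and ui vi uj vj :: "bool list set list"
    let ?u' = "take (length ui - length vi) ui @ drop (length uj - length vj) uj"
    assume "i \<noteq> j" and Pi: "?P i ui vi" and Pj: "?P j uj vj" and uj: "padL uj vj \<in> LL ?m L (Some h)"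
      and splice: "padL ?u' vj \<in> LL ?m L (Some h)"
    have "count_list (spell ?u') False = count_list (spell uj) False"
      using splice uj b_count_cancel[OF gl _ _ h(1), of ?u' uj] unfolding padL_mem_LL_iff rmul_def by simp
    moreover have "count_list (spell ?u') False = i"
      using Pi Pj arg_cong[OF append_take_drop_id[of "length ui - length vi" ui], of "\<lambda>w. count_list (spell w) False"]
      by (simp del: append_take_drop_id)
    ultimately show False
      using Pj \<open>i \<noteq> j\<close> by simp
  qed
qed

theorem theorem3p1p8:
  fixes k :: nat
  assumes "k \<ge> 1"
  shows "prefix_automatic (sgp_carrier (rel_akb k)) (sgp_mult (rel_akb k))
       \<and> \<not> biautomatic (sgp_carrier (rel_akb k)) (sgp_mult (rel_akb k))"
  using prefix_automatic_akb[OF assms] not_biautomatic_akb[OF assms] by simp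

end
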